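(* Let $N=\{1,\dots,n\}$, $\eta>0$, integers $B\ge1$, $Q\ge1$. Let $(A(k))_{k\ge0}$ be $n\times n$ matrices such that each $A(k)$ is doubly stochastic with positive diagonal entries and all positive entries at least $\eta$, and such that for every integer $k\ge0$ the directed graph $(N,\mathcal{E}(A(kB))\cup\cdots\cup\mathcal{E}(A((k+1)B-1)))$ is strongly connected. Let $x(0)\in\mathbb{R}^n$ have all components multiples of $1/Q$, and define componentwise $x_i(k+1)=\lfloor\sum_{j=1}^n a_{ij}(k)x_j(k)\rfloor$, where $\lfloor\cdot\rfloor$ is rounding down to the nearest multiple of $1/Q$. Let $U=\max_ix_i(0)$, $L=\min_ix_i(0)$ and $K=(U-L)Q$. If $k\ge nBK$, then all components of $x(k)$ are equal.
   Context: A matrix is doubly stochastic if it is nonnegative with all row and column sums equal to $1$. For a matrix $A=[a_{ij}]$, $\mathcal{E}(A)$ is the set of directed edges $(j,i)$ (including self-edges) with $a_{ij}>0$. *)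

theory Defs
  imports Complex_Main
begin

text \<open>Matrices are n x n with indices 0..n-1, represented as nat => nat => real
  (row i, column j).\<close>

definition doubly_stochastic :: "nat \<Rightarrow> (nat \<Rightarrow> nat \<Rightarrow> real) \<Rightarrow> bool" where
  "doubly_stochastic n M \<longleftrightarrow>
     (\<forall>i<n. \<forall>j<n. M i j \<ge> 0) \<and>
     (\<forall>i<n. (\<Sum>j<n. M i j) = 1) \<and>
     (\<forall>j<n. (\<Sum>i<n. M i j) = 1)"

definition edges :: "nat \<Rightarrow> (nat \<Rightarrow> nat \<Rightarrow> real) \<Rightarrow> (nat \<times> nat) set" where
  "edges n M = {(j, i). i < n \<and> j < n \<and> M i j > 0}"

definition strongly_connected_on :: "nat \<Rightarrow> (nat \<times> nat) set \<Rightarrow> bool" where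
  "strongly_connected_on n E \<longleftrightarrow> (\<forall>i<n. \<forall>j<n. (i, j) \<in> E\<^sup>*)"

definition round_down :: "nat \<Rightarrow> real \<Rightarrow> real" where
  "round_down Q y = real_of_int \<lfloor>real Q * y\<rfloor> / real Q"

end

theory Submission
  imports Defs
begin

text \<open>Scaling by \<open>Q\<close> turns the states into integers and the rounding into the floor.
  The maximum never increases, and the set of agents attaining it never grows, since
  a row-stochastic average equal to the maximum forces every in-neighbour (including,
  by the positive diagonal, the agent itself) to be at the maximum. By strong connectivity
  of each window of \<open>B\<close> steps some edge enters this set from outside, so the set loses an
  agent per window unless it contains everybody. Hence after \<open>n\<close> windows either all
  agents agree or the (integer) maximum has dropped by at least one, and the spread
  \<open>K\<close> can drop at most \<open>K\<close> times.\<close>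

lemma rtrancl_enters_set:
  assumes "(j, i) \<in> E\<^sup>*" "j \<notin> S" "i \<in> S"
  shows "\<exists>a b. (a, b) \<in> E \<and> a \<notin> S \<and> b \<in> S"
  using assms by (induction rule: rtrancl_induct) blast+

locale quantized_consensus =
  fixes n B :: nat and A :: "nat \<Rightarrow> nat \<Rightarrow> nat \<Rightarrow> real" and Y :: "nat \<Rightarrow> nat \<Rightarrow> int"
  assumes nonneg: "\<And>t i j. i < n \<Longrightarrow> j < n \<Longrightarrow> 0 \<le> A t i j"
    and row_sum: "\<And>t i. i < n \<Longrightarrow> (\<Sum>j<n. A t i j) = 1"
    and diag_pos: "\<And>t i. i < n \<Longrightarrow> 0 < A t i i"
    and conn: "\<And>r. strongly_connected_on n (\<Union>t\<in>{r*B..<(r+1)*B}. edges n (A t))"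
    and update: "\<And>t i. i < n \<Longrightarrow> Y (Suc t) i = \<lfloor>\<Sum>j<n. A t i j * of_int (Y t j)\<rfloor>"
begin

lemma average_le:
  assumes "\<forall>j<n. f j \<le> c" "i < n"
  shows "(\<Sum>j<n. A t i j * f j) \<le> c"
proof -
  have "(\<Sum>j<n. A t i j * f j) \<le> (\<Sum>j<n. A t i j * c)"
    by (rule sum_mono) (use assms nonneg in \<open>auto intro: mult_left_mono\<close>)
  also have "\<dots> = c" using row_sum[OF assms(2)] by (simp add: sum_distrib_right[symmetric])
  finally show ?thesis .
qed

lemma average_ge:
  assumes "\<forall>j<n. c \<le> f j" "i < n"
  shows "c \<le> (\<Sum>j<n. A t i j * f j)"
  using average_le[of "\<lambda>j. - f j" "- c" i t] assms by (simp add: sum_negf)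

lemma upper_bound_step: "\<forall>j<n. Y t j \<le> c \<Longrightarrow> \<forall>i<n. Y (Suc t) i \<le> c"
  using floor_mono[OF average_le[of "\<lambda>j. of_int (Y t j)" "of_int c"]] by (simp add: update)

lemma lower_bound_step: "\<forall>j<n. c \<le> Y t j \<Longrightarrow> \<forall>i<n. c \<le> Y (Suc t) i"
  using average_ge[of "of_int c" "\<lambda>j. of_int (Y t j)"] by (simp add: update le_floor_iff)

lemma upper_bound_persists: "\<forall>j<n. Y t j \<le> c \<Longrightarrow> \<forall>j<n. Y (t + s) j \<le> c"
  by (induction s) (simp_all add: upper_bound_step)

lemma lower_bound_persists: "\<forall>j<n. c \<le> Y t j \<Longrightarrow> \<forall>j<n. c \<le> Y (t + s) j"
  by (induction s) (simp_all add: lower_bound_step)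

lemma at_bound_if_neighbour_at_bound:
  assumes bd: "\<forall>j<n. Y t j \<le> c" and i: "i < n" and eq: "Y (Suc t) i = c"
    and j: "j < n" "0 < A t i j"
  shows "Y t j = c"
proof -
  have "of_int c \<le> (\<Sum>j<n. A t i j * of_int (Y t j))"
    using eq update[OF i] of_int_floor_le by metis
  moreover have "(\<Sum>j<n. A t i j * of_int (Y t j)) \<le> of_int c"
    using bd i by (intro average_le) simp_all
  ultimately have "(\<Sum>j<n. A t i j * (of_int c - of_int (Y t j))) = 0"
    using row_sum[OF i] by (simp add: right_diff_distrib sum_subtractf sum_distrib_right[symmetric])
  moreover have "\<forall>j\<in>{..<n}. 0 \<le> A t i j * (of_int c - of_int (Y t j))"
    using bd nonneg[OF i] by auto
  ultimately have "A t i j * (of_int c - of_int (Y t j)) = 0"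
    using j(1) sum_nonneg_eq_0_iff[of "{..<n}" "\<lambda>j. A t i j * (of_int c - of_int (Y t j))"]
    by auto
  then show ?thesis using j(2) by simp
qed

definition level_set :: "nat \<Rightarrow> int \<Rightarrow> nat set" where
  "level_set t c = {i. i < n \<and> Y t i = c}"

lemma level_set_antimono:
  assumes "\<forall>j<n. Y t j \<le> c"
  shows "level_set (t + s) c \<subseteq> level_set t c"
proof (induction s)
  case (Suc s)
  have "level_set (Suc (t + s)) c \<subseteq> level_set (t + s) c"
    using at_bound_if_neighbour_at_bound[OF upper_bound_persists[OF assms]] diag_pos
    unfolding level_set_def by blast
  then show ?case using Suc by simp
qed simp

lemma level_set_window_psubset:
  assumes bd: "\<forall>j<n. Y (r*B) j \<le> c"
    and ne: "i \<in> level_set (r*B) c" and out: "j < n" "j \<notin> level_set (r*B) c"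
  shows "level_set (r*B + B) c \<subset> level_set (r*B) c"
proof (rule psubsetI[OF level_set_antimono[OF bd]], rule notI)
  let ?t = "r*B" and ?S = "level_set (r*B) c"
  assume eq: "level_set (?t + B) c = ?S"
  have const: "level_set (?t + s) c = ?S" if "s \<le> B" for s
  proof -
    have "level_set (?t + s + (B - s)) c \<subseteq> level_set (?t + s) c"
      by (rule level_set_antimono[OF upper_bound_persists[OF bd]])
    moreover have "?t + s + (B - s) = ?t + B" using that by simp
    ultimately show ?thesis using level_set_antimono[OF bd, of s] eq by auto
  qed
  let ?E = "\<Union>t\<in>{r*B..<(r+1)*B}. edges n (A t)"
  have "i < n" using ne unfolding level_set_def by simp
  then have "(j, i) \<in> ?E\<^sup>*"
    using conn[of r] out(1) unfolding strongly_connected_on_def by blast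
  then obtain a b where ab: "(a, b) \<in> ?E" "a \<notin> ?S" "b \<in> ?S"
    using rtrancl_enters_set[OF _ out(2) ne] by blast
  then obtain \<tau> where \<tau>: "?t \<le> \<tau>" "\<tau> < ?t + B" "(a, b) \<in> edges n (A \<tau>)" by auto
  define s where "s = \<tau> - ?t"
  have s: "s < B" "(a, b) \<in> edges n (A (?t + s))" using \<tau> unfolding s_def by auto
  then have a: "a < n" "b < n" "0 < A (?t + s) b a" unfolding edges_def by auto
  have "Y (Suc (?t + s)) b = c"
    using const[of "Suc s"] s(1) ab(3) unfolding level_set_def by auto
  then have "Y (?t + s) a = c"
    using at_bound_if_neighbour_at_bound[OF upper_bound_persists[OF bd]] a by blast
  then show False using const[of s] s(1) a(1) ab(2) unfolding level_set_def by auto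
qed

lemma level_set_empty_after_n_windows:
  assumes bd: "\<forall>j<n. Y (r*B) j \<le> c" and out: "j < n" "Y (r*B) j \<noteq> c"
  shows "level_set (r*B + n*B) c = {}"
proof -
  let ?S = "\<lambda>m. level_set (r*B + m*B) c"
  have fin: "finite (?S m)" for m unfolding level_set_def by simp
  have "?S m = {} \<or> card (?S m) + m \<le> card (?S 0)" for m
  proof (induction m)
    case (Suc m)
    have bdm: "\<forall>j<n. Y ((r + m)*B) j \<le> c"
      using upper_bound_persists[OF bd, of "m*B"] by (simp add: algebra_simps)
    show ?case
    proof (cases "?S m = {}")
      case True
      then show ?thesis using level_set_antimono[OF bdm, of B] by (simp add: algebra_simps)
    next
      case False
      then obtain i where "i \<in> ?S m" by blast
      moreover have "j \<notin> ?S m"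
        using out level_set_antimono[OF bd, of "m*B"] unfolding level_set_def by auto
      ultimately have "?S (Suc m) \<subset> ?S m"
        using level_set_window_psubset[OF bdm _ out(1)] by (simp add: algebra_simps)
      then have "card (?S (Suc m)) < card (?S m)" by (rule psubset_card_mono[OF fin])
      then show ?thesis using Suc False by auto
    qed
  qed simp
  moreover have "card (?S 0) < card {..<n}"
    using out by (intro psubset_card_mono) (auto simp: level_set_def)
  ultimately show ?thesis by force
qed

definition consensus :: "nat \<Rightarrow> bool" where
  "consensus t \<longleftrightarrow> (\<exists>c. \<forall>i<n. Y t i = c)"

lemma consensus_persists:
  assumes "consensus t" shows "consensus (t + s)"
proof -
  obtain c where "\<forall>i<n. Y t i = c" using assms unfolding consensus_def by blast
  then have "\<forall>i<n. Y (t + s) i \<le> c" "\<forall>i<n. c \<le> Y (t + s) i"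
    using upper_bound_persists lower_bound_persists by auto
  then show ?thesis unfolding consensus_def by (intro exI[of _ c]) (auto intro: order_antisym)
qed

lemma consensus_or_max_drops:
  assumes bd: "\<forall>j<n. Y (r*B) j \<le> c"
  shows "consensus (r*B) \<or> (\<forall>i<n. Y (r*B + n*B) i \<le> c - 1)"
proof (cases "\<exists>j<n. Y (r*B) j \<noteq> c")
  case True
  then obtain j where "j < n" "Y (r*B) j \<noteq> c" by blast
  from level_set_empty_after_n_windows[OF bd this] upper_bound_persists[OF bd, of "n*B"]
  have "\<forall>i<n. Y (r*B + n*B) i \<le> c - 1" unfolding level_set_def by fastforce
  then show ?thesis ..
qed (auto simp: consensus_def)

lemma consensus_after_windows:
  assumes "\<forall>i<n. L \<le> Y (r*B) i \<and> Y (r*B) i \<le> L + int d"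
  shows "consensus (r*B + d*(n*B))"
  using assms
proof (induction d arbitrary: r)
  case 0
  then have "\<forall>i<n. Y (r*B) i = L" by force
  then show ?case unfolding consensus_def by auto
next
  case (Suc d)
  have shift: "r*B + Suc d*(n*B) = (r + n)*B + d*(n*B)" by (simp add: algebra_simps)
  have "\<forall>j<n. Y (r*B) j \<le> L + int (Suc d)" using Suc.prems by blast
  from consensus_or_max_drops[OF this] show ?case
  proof
    assume "consensus (r*B)"
    then show ?thesis using consensus_persists by blast
  next
    assume "\<forall>i<n. Y (r*B + n*B) i \<le> L + int (Suc d) - 1"
    moreover have "\<forall>i<n. L \<le> Y (r*B + n*B) i"
      using lower_bound_persists[of L "r*B"] Suc.prems by blast
    ultimately have "\<forall>i<n. L \<le> Y ((r + n)*B) i \<and> Y ((r + n)*B) i \<le> L + int d"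
      by (simp add: algebra_simps)
    then show ?thesis unfolding shift by (rule Suc.IH)
  qed
qed

lemma consensus_after_spread:
  assumes "0 < n"
    and "real n * real B * of_int (Max (Y 0 ` {..<n}) - Min (Y 0 ` {..<n})) \<le> real k"
  shows "consensus k"
proof -
  define L where "L = Min (Y 0 ` {..<n})"
  define H where "H = Max (Y 0 ` {..<n})"
  define d where "d = nat (H - L)"
  have range: "L \<le> Y 0 i \<and> Y 0 i \<le> H" if "i < n" for i
    using that unfolding L_def H_def by auto
  then have d: "int d = H - L" using assms(1) unfolding d_def by fastforce
  have "consensus (d*(n*B))"
    using consensus_after_windows[of L 0 d] range d by simp
  moreover have "real (d*(n*B)) \<le> real k"
  proof -
    have "of_int (H - L) = real d" using d by (metis of_int_of_nat_eq)
    then show ?thesis using assms(2) unfolding H_def L_def by (simp add: ac_simps)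
  qed
  then have "d*(n*B) \<le> k" by (simp only: of_nat_le_iff)
  ultimately show ?thesis using consensus_persists[of "d*(n*B)" "k - d*(n*B)"] by simp
qed

end

lemma scaled_Max_Min:
  fixes f :: "'a \<Rightarrow> real"
  assumes "finite I" "I \<noteq> {}" "c > 0" "\<And>i. i \<in> I \<Longrightarrow> c * f i = of_int (g i)"
  shows "c * Max (f ` I) = of_int (Max (g ` I))" and "c * Min (f ` I) = of_int (Min (g ` I))"
proof -
  have mono: "mono (\<lambda>v. c * v)" "mono (of_int :: int \<Rightarrow> real)"
    using assms(3) by (auto intro: monoI)
  have img: "(\<lambda>v. c * v) ` f ` I = of_int ` g ` I"
    using assms(4) by (force simp: image_image)
  show "c * Max (f ` I) = of_int (Max (g ` I))"
    using mono_Max_commute[OF mono(1)] mono_Max_commute[OF mono(2)] img assms(1,2) by simp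
  show "c * Min (f ` I) = of_int (Min (g ` I))"
    using mono_Min_commute[OF mono(1)] mono_Min_commute[OF mono(2)] img assms(1,2) by simp
qed

theorem proposition3:
  fixes n B Q :: nat and \<eta> :: real
    and A :: "nat \<Rightarrow> nat \<Rightarrow> nat \<Rightarrow> real"
    and x :: "nat \<Rightarrow> nat \<Rightarrow> real"
  assumes eta_pos: "\<eta> > 0"
    and B_pos: "B \<ge> 1" and Q_pos: "Q \<ge> 1"
    and ds: "\<And>k. doubly_stochastic n (A k)"
    and diag: "\<And>k i. i < n \<Longrightarrow> A k i i > 0"
    and lower: "\<And>k i j. i < n \<Longrightarrow> j < n \<Longrightarrow> A k i j > 0 \<Longrightarrow> A k i j \<ge> \<eta>"
    and conn: "\<And>k. strongly_connected_on n (\<Union>t\<in>{k*B..<(k+1)*B}. edges n (A t))"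
    and init: "\<And>i. i < n \<Longrightarrow> \<exists>m::int. x 0 i = real_of_int m / real Q"
    and step: "\<And>k i. i < n \<Longrightarrow> x (Suc k) i = round_down Q (\<Sum>j<n. A k i j * x k j)"
    and k_ge: "real k \<ge> real n * real B *
                 ((Max (x 0 ` {..<n}) - Min (x 0 ` {..<n})) * real Q)"
  shows "\<forall>i<n. \<forall>j<n. x k i = x k j"
proof (cases "n = 0")
  case False
  define Y where "Y t i = \<lfloor>real Q * x t i\<rfloor>" for t i
  have Q: "real Q > 0" using Q_pos by simp
  have scaled: "real Q * x t i = of_int (Y t i)" if "i < n" for t i
  proof (cases t)
    case 0
    then show ?thesis using init[OF that] Q unfolding Y_def by auto
  next
    case (Suc s)
    show ?thesis using Q by (simp add: Suc Y_def step[OF that] round_down_def)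
  qed
  interpret quantized_consensus n B A Y
  proof
    fix t i assume i: "i < n"
    have "real Q * (\<Sum>j<n. A t i j * x t j) = (\<Sum>j<n. A t i j * of_int (Y t j))"
      unfolding sum_distrib_left by (intro sum.cong refl) (simp add: mult.left_commute flip: scaled)
    then show "Y (Suc t) i = \<lfloor>\<Sum>j<n. A t i j * of_int (Y t j)\<rfloor>"
      using Q unfolding Y_def step[OF i] round_down_def by simp
  qed (use ds diag conn in \<open>auto simp: doubly_stochastic_def\<close>)
  have "(Max (x 0 ` {..<n}) - Min (x 0 ` {..<n})) * real Q
      = of_int (Max (Y 0 ` {..<n}) - Min (Y 0 ` {..<n}))"
    using scaled_Max_Min[of "{..<n}" "real Q" "x 0" "Y 0"] False Q scaled lessThan_empty_iff
    by (simp add: algebra_simps)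
  then have "consensus k" using consensus_after_spread False k_ge by simp
  then obtain c where "\<forall>i<n. real Q * x k i = of_int c" using scaled unfolding consensus_def by auto
  then show ?thesis using Q by (metis mult_cancel_left less_irrefl)
qed simp

end
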